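(* Let $\beta=(\pi_\ell)_{\ell=1}^L$ be a chainable architecture, let $\mathbf{M}$ be a complex matrix of size $a_1b_1d_1\times a_Lc_Ld_L$, and let $s,q\in\{1,\dots,L-1\}$. If $\mathbf{N}$ is a projection of $\mathbf{M}$ onto $\mathcal{B}^{\beta_q}$, i.e. $\mathbf{N}\in\mathcal{B}^{\beta_q}$ and $\|\mathbf{M}-\mathbf{N}\|_F=\min_{\mathbf{B}\in\mathcal{B}^{\beta_q}}\|\mathbf{M}-\mathbf{B}\|_F$, then $$E^{\beta_s}(\mathbf{M})\ge E^{\beta_s}(\mathbf{N}).$$
   Context: A pattern is a tuple $\pi=(a,b,c,d)$ of positive integers; $\mathbf{S}_\pi:=\mathbf{I}_a\otimes\mathbf{1}_{b\times c}\otimes\mathbf{I}_d\in\{0,1\}^{abd\times acd}$. A $\pi$-factor is a complex $abd\times acd$ matrix with support in that of $\mathbf{S}_\pi$; $\Sigma^\pi$ is the set of $\pi$-factors. Patterns $\pi=(a,b,c,d),\pi'=(a',b',c',d')$ are chainable if $ac/a'=b'd'/d$ is an integer, $a\mid a'$, $d'\mid d$; then $\pi*\pi':=(a,bd/d',a'c'/a,d')$. An architecture $\beta=(\pi_\ell)_{\ell=1}^L$, $\pi_\ell=(a_\ell,b_\ell,c_\ell,d_\ell)$, is a sequence of patterns with $a_\ell c_\ell d_\ell=a_{\ell+1}b_{\ell+1}d_{\ell+1}$, chainable if every consecutive pair is chainable; $\pi_p*\cdots*\pi_q$ is the iterated product. For $s\in\{1,\dots,L-1\}$, $\beta_s:=(\pi_1*\cdots*\pi_s,\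 \pi_{s+1}*\cdots*\pi_L)$, $\mathcal{B}^{\beta_s}:=\{\mathbf{X}\mathbf{Y}:\mathbf{X}\in\Sigma^{\pi_1*\cdots*\pi_s},\mathbf{Y}\in\Sigma^{\pi_{s+1}*\cdots*\pi_L}\}$, and $E^{\beta_s}(\mathbf{A}):=\min_{\mathbf{B}\in\mathcal{B}^{\beta_s}}\|\mathbf{A}-\mathbf{B}\|_F$. *)

theory Defs
  imports "HOL-Analysis.Analysis"
begin

text \<open>Matrices of arbitrary size are represented as functions nat => nat => complex
  together with explicit dimensions (0-based indices).\<close>

type_synonym cmat = "nat \<Rightarrow> nat \<Rightarrow> complex"
type_synonym pattern = "nat \<times> nat \<times> nat \<times> nat"

definition frob :: "nat \<Rightarrow> nat \<Rightarrow> cmat \<Rightarrow> real" where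
  "frob m n A = sqrt (\<Sum>i<m. \<Sum>j<n. (cmod (A i j))\<^sup>2)"

definition mmult :: "nat \<Rightarrow> cmat \<Rightarrow> cmat \<Rightarrow> cmat" where
  "mmult k X Y = (\<lambda>i l. \<Sum>j<k. X i j * Y j l)"

definition prows :: "pattern \<Rightarrow> nat" where
  "prows p = (case p of (a,b,c,d) \<Rightarrow> a*b*d)"

definition pcols :: "pattern \<Rightarrow> nat" where
  "pcols p = (case p of (a,b,c,d) \<Rightarrow> a*c*d)"

text \<open>Support of S_pi = I_a (x) 1_{b x c} (x) I_d: row i = i1*(b*d)+i2*d+i3,
  column j = j1*(c*d)+j2*d+j3; entry is 1 iff i1 = j1 and i3 = j3.\<close>
definition supp_S :: "pattern \<Rightarrow> nat \<Rightarrow> nat \<Rightarrow> bool" where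
  "supp_S p i j = (case p of (a,b,c,d) \<Rightarrow>
     i < a*b*d \<and> j < a*c*d \<and> i div (b*d) = j div (c*d) \<and> i mod d = j mod d)"

text \<open>pi-factors: matrices of size abd x acd supported in supp(S_pi)
  (entries outside the matrix are zero by convention).\<close>
definition factors :: "pattern \<Rightarrow> cmat set" where
  "factors p = {X. \<forall>i j. X i j \<noteq> 0 \<longrightarrow> supp_S p i j}"

definition pattern_pos :: "pattern \<Rightarrow> bool" where
  "pattern_pos p = (case p of (a,b,c,d) \<Rightarrow> 0 < a \<and> 0 < b \<and> 0 < c \<and> 0 < d)"

definition chainable :: "pattern \<Rightarrow> pattern \<Rightarrow> bool" where
  "chainable p p' = (case p of (a,b,c,d) \<Rightarrow> case p' of (a',b',c',d') \<Rightarrow>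
     a' dvd a*c \<and> (a*c) div a' * d = b'*d' \<and> a dvd a' \<and> d' dvd d)"

definition pstar :: "pattern \<Rightarrow> pattern \<Rightarrow> pattern" where
  "pstar p p' = (case p of (a,b,c,d) \<Rightarrow> case p' of (a',b',c',d') \<Rightarrow>
     (a, b*d div d', a'*c' div a, d'))"

definition iter_star :: "pattern list \<Rightarrow> pattern" where
  "iter_star ps = foldl pstar (hd ps) (tl ps)"

definition architecture :: "pattern list \<Rightarrow> bool" where
  "architecture ps = (ps \<noteq> [] \<and> (\<forall>p\<in>set ps. pattern_pos p) \<and>
     (\<forall>l. Suc l < length ps \<longrightarrow> pcols (ps ! l) = prows (ps ! Suc l)))"

definition chainable_arch :: "pattern list \<Rightarrow> bool" where
  "chainable_arch ps = (architecture ps \<and>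
     (\<forall>l. Suc l < length ps \<longrightarrow> chainable (ps ! l) (ps ! Suc l)))"

text \<open>beta_s = (pi_1*...*pi_s, pi_{s+1}*...*pi_L), s 1-based.\<close>
definition split_left :: "pattern list \<Rightarrow> nat \<Rightarrow> pattern" where
  "split_left ps s = iter_star (take s ps)"

definition split_right :: "pattern list \<Rightarrow> nat \<Rightarrow> pattern" where
  "split_right ps s = iter_star (drop s ps)"

definition Bset :: "pattern list \<Rightarrow> nat \<Rightarrow> cmat set" where
  "Bset ps s = {mmult (pcols (split_left ps s)) X Y | X Y.
      X \<in> factors (split_left ps s) \<and> Y \<in> factors (split_right ps s)}"

definition arows :: "pattern list \<Rightarrow> nat" where
  "arows ps = prows (hd ps)"

definition acols :: "pattern list \<Rightarrow> nat" where
  "acols ps = pcols (last ps)"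

definition Err :: "pattern list \<Rightarrow> nat \<Rightarrow> cmat \<Rightarrow> real" where
  "Err ps s A = Inf ((\<lambda>B. frob (arows ps) (acols ps) (\<lambda>i j. A i j - B i j)) ` Bset ps s)"

end

theory Submission
  imports Defs
begin

text \<open>Write \<open>N = X\<^sub>N Y\<^sub>N\<close> and take \<open>X Y \<in> \<B>\<^bsup>\<beta>\<^sub>s\<^esup>\<close>, say with \<open>q < s\<close> (the case \<open>s < q\<close> is the
  transposed one). Chainability makes the support of \<open>\<pi>\<^sub>1 * \<dots> * \<pi>\<^sub>s\<close> the composition of those of
  \<open>\<pi>\<^sub>1 * \<dots> * \<pi>\<^sub>q\<close> and of the middle product \<open>\<pi>\<^bsub>q+1\<^esub> * \<dots> * \<pi>\<^sub>s\<close>, so for every \<open>Z\<close> supported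
  on the middle product \<open>X' = X\<^sub>N Z\<close> is a left factor for \<open>\<beta>\<^sub>s\<close> and \<open>Z Y\<close> a right factor for
  \<open>\<beta>\<^sub>q\<close>. Optimality of \<open>N\<close> makes \<open>M - N\<close> orthogonal to every \<open>X\<^sub>N W\<close> with \<open>W\<close> a right factor
  for \<open>\<beta>\<^sub>q\<close>. Taking \<open>X\<^sub>N Z\<close> to be the orthogonal projection of \<open>X\<close> onto these products, the
  support conditions make \<open>X Y - X' Y\<close> orthogonal to all \<open>X\<^sub>N W\<close> as well. As
  \<open>N - X' Y = X\<^sub>N (Y\<^sub>N - Z Y)\<close>, Pythagoras gives \<open>\<parallel>N - X' Y\<parallel> \<le> \<parallel>M - X Y\<parallel>\<close>, and the
  claim follows by taking infima.\<close>

section \<open>The Frobenius inner product\<close>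

definition minner :: "nat \<Rightarrow> nat \<Rightarrow> cmat \<Rightarrow> cmat \<Rightarrow> complex" where
  "minner m n A B = (\<Sum>i<m. \<Sum>j<n. A i j * cnj (B i j))"

definition mnormsq :: "nat \<Rightarrow> nat \<Rightarrow> cmat \<Rightarrow> real" where
  "mnormsq m n A = (\<Sum>i<m. \<Sum>j<n. (cmod (A i j))\<^sup>2)"

lemma frob_eq_sqrt_mnormsq: "frob m n A = sqrt (mnormsq m n A)"
  by (simp add: frob_def mnormsq_def)

lemma mnormsq_nonneg: "0 \<le> mnormsq m n A"
  unfolding mnormsq_def by (intro sum_nonneg) auto

lemma frob_nonneg: "0 \<le> frob m n A"
  by (simp add: frob_eq_sqrt_mnormsq mnormsq_nonneg)

lemma minner_self: "minner m n A A = of_real (mnormsq m n A)"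
  unfolding minner_def mnormsq_def by (simp add: complex_norm_square[symmetric] of_real_sum)

lemma minner_diff_left: "minner m n (\<lambda>i j. A i j - B i j) C = minner m n A C - minner m n B C"
  unfolding minner_def by (simp add: left_diff_distrib sum_subtractf)

lemma minner_add_right: "minner m n C (\<lambda>i j. A i j + B i j) = minner m n C A + minner m n C B"
  unfolding minner_def by (simp add: distrib_left sum.distrib)

lemma minner_scale_left: "minner m n (\<lambda>i j. c * A i j) B = c * minner m n A B"
  unfolding minner_def by (simp add: sum_distrib_left mult.assoc)

lemma minner_scale_right: "minner m n A (\<lambda>i j. c * B i j) = cnj c * minner m n A B"
  unfolding minner_def by (simp add: sum_distrib_left mult_ac)

lemma cnj_minner: "cnj (minner m n A B) = minner m n B A"
  unfolding minner_def by (simp add: mult.commute)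

lemma mnormsq_add:
  "mnormsq m n (\<lambda>i j. A i j + B i j) = mnormsq m n A + mnormsq m n B + 2 * Re (minner m n A B)"
proof -
  have "(cmod (a + b))\<^sup>2 = (cmod a)\<^sup>2 + (cmod b)\<^sup>2 + 2 * Re (a * cnj b)" for a b :: complex
    by (simp only: cmod_power2) (simp add: algebra_simps power2_eq_square)
  then show ?thesis
    unfolding mnormsq_def minner_def by (simp add: sum.distrib sum_distrib_left)
qed

lemma mnormsq_scale: "mnormsq m n (\<lambda>i j. c * A i j) = (cmod c)\<^sup>2 * mnormsq m n A"
  unfolding mnormsq_def by (simp add: norm_mult power_mult_distrib sum_distrib_left)

lemma mnormsq_le_if_orthogonal:
  assumes "Re (minner m n (\<lambda>i j. M i j - N i j) (\<lambda>i j. N i j - B' i j)) = 0"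
    and "Re (minner m n (\<lambda>i j. B i j - B' i j) (\<lambda>i j. N i j - B' i j)) = 0"
  shows "mnormsq m n (\<lambda>i j. N i j - B' i j) \<le> mnormsq m n (\<lambda>i j. M i j - B i j)"
proof -
  let ?P = "\<lambda>i j. N i j - B' i j" and ?Q = "\<lambda>i j. (M i j - N i j) - (B i j - B' i j)"
  have "Re (minner m n ?P ?Q) = Re (cnj (minner m n ?Q ?P))"
    by (simp only: cnj_minner)
  also have "\<dots> = 0"
    using assms by (simp add: minner_diff_left)
  moreover have "(\<lambda>i j. ?P i j + ?Q i j) = (\<lambda>i j. M i j - B i j)"
    by simp
  ultimately have "mnormsq m n (\<lambda>i j. M i j - B i j) = mnormsq m n ?P + mnormsq m n ?Q"
    using mnormsq_add[of m n ?P ?Q] by simp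
  then show ?thesis
    using mnormsq_nonneg[of m n ?Q] by simp
qed

lemma minner_eq_0_if_mnormsq_eq_0:
  assumes "mnormsq m n B = 0"
  shows "minner m n A B = 0"
proof -
  have "B i j = 0" if "i < m" "j < n" for i j
    using assms that unfolding mnormsq_def
    by (simp add: sum_nonneg_eq_0_iff sum_nonneg)
  then show ?thesis
    by (simp add: minner_def)
qed

lemma Re_minner_eq_0_if_minimal:
  assumes minimal: "\<And>t::real. mnormsq m n D \<le> mnormsq m n (\<lambda>i j. D i j - of_real t * V i j)"
  shows "Re (minner m n D V) = 0"
proof -
  define c where "c = Re (minner m n D V)"
  define v where "v = mnormsq m n V"
  have v_nonneg: "0 \<le> v"
    by (simp add: v_def mnormsq_nonneg)
  have expand: "mnormsq m n (\<lambda>i j. D i j - of_real x * V i j) = mnormsq m n D + x\<^sup>2 * v - 2 * x * c" for x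
    using mnormsq_add[of m n D "\<lambda>i j. of_real (- x) * V i j"]
      mnormsq_scale[of m n "of_real (- x)" V] minner_scale_right[of m n D "of_real (- x)" V]
    by (simp add: v_def c_def)
  have quadratic_nonneg: "0 \<le> x\<^sup>2 * v - 2 * x * c" for x
    using minimal[of x] unfolding expand by linarith
  define t where "t = c / (v + 1)"
  have c_eq: "c = t * (v + 1)"
    using v_nonneg by (simp add: t_def)
  have "0 \<le> t\<^sup>2 * v - 2 * t * (t * (v + 1))"
    using quadratic_nonneg[of t] by (simp only: c_eq)
  then have "t\<^sup>2 * (v + 2) \<le> 0"
    by (simp add: algebra_simps power2_eq_square)
  with v_nonneg have "t = 0"
    by (simp add: mult_le_0_iff)
  with c_eq show ?thesis
    by (simp add: c_def)
qed

section \<open>Products of matrices with prescribed supports\<close>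

lemma mmult_add_right:
  "mmult k X (\<lambda>i j. A i j + B i j) = (\<lambda>i j. mmult k X A i j + mmult k X B i j)"
  by (simp add: mmult_def distrib_left sum.distrib)

lemma mmult_diff_right:
  "mmult k X (\<lambda>i j. A i j - B i j) = (\<lambda>i j. mmult k X A i j - mmult k X B i j)"
  by (simp add: mmult_def right_diff_distrib sum_subtractf)

lemma mmult_scale_right: "mmult k X (\<lambda>i j. c * A i j) = (\<lambda>i j. c * mmult k X A i j)"
  by (simp add: mmult_def sum_distrib_left mult.left_commute)

lemma mmult_diff_left:
  "mmult k (\<lambda>i j. A i j - B i j) Y = (\<lambda>i j. mmult k A Y i j - mmult k B Y i j)"
  by (simp add: mmult_def left_diff_distrib sum_subtractf)

lemma mmult_assoc: "mmult k2 (mmult k1 X Y) Z = mmult k1 X (mmult k2 Y Z)"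
  unfolding mmult_def
  by (intro ext) (simp add: sum_distrib_left sum_distrib_right mult.assoc sum.swap[of _ "{..<k2}"])

definition supported :: "(nat \<Rightarrow> nat \<Rightarrow> bool) \<Rightarrow> cmat set" where
  "supported R = {X. \<forall>i j. X i j \<noteq> 0 \<longrightarrow> R i j}"

lemma factors_eq_supported: "factors p = supported (supp_S p)"
  by (simp add: factors_def supported_def)

lemma supported_add: "A \<in> supported R \<Longrightarrow> B \<in> supported R \<Longrightarrow> (\<lambda>i j. A i j + B i j) \<in> supported R"
  by (auto simp: supported_def) (metis add_0)

lemma supported_diff: "A \<in> supported R \<Longrightarrow> B \<in> supported R \<Longrightarrow> (\<lambda>i j. A i j - B i j) \<in> supported R"
  by (auto simp: supported_def) metis

lemma supported_scale: "A \<in> supported R \<Longrightarrow> (\<lambda>i j. c * A i j) \<in> supported R"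
  by (auto simp: supported_def)

lemma supported_mono: "A \<in> supported R \<Longrightarrow> (\<And>i j. R i j \<Longrightarrow> R' i j) \<Longrightarrow> A \<in> supported R'"
  by (auto simp: supported_def)

lemma mmult_supported:
  assumes "X \<in> supported R1" "Y \<in> supported R2" "\<And>i p j. R1 i p \<Longrightarrow> R2 p j \<Longrightarrow> R i j"
  shows "mmult k X Y \<in> supported R"
  unfolding supported_def mem_Collect_eq
proof (intro allI impI)
  fix i j
  assume "mmult k X Y i j \<noteq> 0"
  then obtain p where "X i p * Y p j \<noteq> 0"
    unfolding mmult_def by (meson sum.neutral)
  then have "X i p \<noteq> 0" "Y p j \<noteq> 0"
    by auto
  then show "R i j"
    using assms unfolding supported_def by blast
qed

definition single_entry :: "nat \<Rightarrow> nat \<Rightarrow> cmat" where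
  "single_entry a b = (\<lambda>i j. if (i, j) = (a, b) then 1 else 0)"

lemma orthogonal_supported_insert:
  assumes orth: "\<And>V. V \<in> supported (\<lambda>i j. (i, j) \<in> S) \<Longrightarrow> minner m n R (mmult k A V) = 0"
    and orth_entry: "minner m n R (mmult k A (single_entry a b)) = 0"
    and W: "W \<in> supported (\<lambda>i j. (i, j) \<in> insert (a, b) S)"
  shows "minner m n R (mmult k A W) = 0"
proof -
  define V where "V = (\<lambda>i j. if (i, j) = (a, b) then 0 else W i j)"
  have V: "V \<in> supported (\<lambda>i j. (i, j) \<in> S)"
    using W by (auto simp: supported_def V_def)
  have W_eq: "W = (\<lambda>i j. V i j + W a b * single_entry a b i j)"
    by (intro ext) (auto simp: V_def single_entry_def)
  have "mmult k A W = (\<lambda>i j. mmult k A V i j + W a b * mmult k A (single_entry a b) i j)"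
    by (subst W_eq) (simp only: mmult_add_right mmult_scale_right)
  then show ?thesis
    by (simp add: minner_add_right minner_scale_right orth[OF V] orth_entry)
qed

lemma exists_scalar_orthogonal: "\<exists>t. minner m n (\<lambda>i j. r i j - t * w i j) w = 0"
proof (cases "minner m n w w = 0")
  case True
  then have "minner m n r w = 0"
    by (intro minner_eq_0_if_mnormsq_eq_0) (simp add: minner_self)
  then show ?thesis
    by (intro exI[of _ 0]) simp
next
  case False
  then show ?thesis
    by (intro exI[of _ "minner m n r w / minner m n w w"])
      (simp only: minner_diff_left minner_scale_left, simp)
qed

lemma exists_orthogonal_residual:
  assumes "finite S"
  shows "\<exists>Z\<in>supported (\<lambda>i j. (i, j) \<in> S). \<forall>W\<in>supported (\<lambda>i j. (i, j) \<in> S).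
           minner m n (\<lambda>i j. X i j - mmult k A Z i j) (mmult k A W) = 0"
  using assms
proof (induction S arbitrary: X rule: finite_induct)
  case empty
  have "mmult k A W = (\<lambda>i j. 0)" if "W \<in> supported (\<lambda>i j. (i, j) \<in> {})" for W
    using that by (simp add: supported_def mmult_def)
  then show ?case
    by (intro bexI[of _ "\<lambda>i j. 0"] ballI) (simp_all add: supported_def minner_def)
next
  case (insert e S)
  obtain a b where e: "e = (a, b)"
    by fastforce
  let ?S = "supported (\<lambda>i j. (i, j) \<in> S)"
  let ?E = "single_entry a b"
  obtain Z1 where Z1: "Z1 \<in> ?S"
    and orth1: "\<And>W. W \<in> ?S \<Longrightarrow> minner m n (\<lambda>i j. X i j - mmult k A Z1 i j) (mmult k A W) = 0"
    using insert.IH by blast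
  obtain Z2 where Z2: "Z2 \<in> ?S"
    and orth2: "\<And>W. W \<in> ?S \<Longrightarrow> minner m n (\<lambda>i j. mmult k A ?E i j - mmult k A Z2 i j) (mmult k A W) = 0"
    using insert.IH by blast
  define r where "r = (\<lambda>i j. X i j - mmult k A Z1 i j)"
  \<comment> \<open>Gram-Schmidt step: \<open>w\<close> is the component of \<open>A ?E\<close> orthogonal to the span for \<open>S\<close>.\<close>
  define w where "w = (\<lambda>i j. mmult k A ?E i j - mmult k A Z2 i j)"
  obtain t where orth_w: "minner m n (\<lambda>i j. r i j - t * w i j) w = 0"
    using exists_scalar_orthogonal by blast
  define Z where "Z = (\<lambda>i j. Z1 i j + t * (?E i j - Z2 i j))"
  have "?E \<in> supported (\<lambda>i j. (i, j) \<in> insert e S)"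
    by (simp add: supported_def single_entry_def e)
  then have Z: "Z \<in> supported (\<lambda>i j. (i, j) \<in> insert e S)"
    unfolding Z_def using supported_mono[OF Z1] supported_mono[OF Z2]
    by (intro supported_add supported_scale supported_diff) auto
  have residual: "(\<lambda>i j. X i j - mmult k A Z i j) = (\<lambda>i j. r i j - t * w i j)"
    by (simp add: Z_def r_def w_def mmult_add_right mmult_diff_right mmult_scale_right algebra_simps)
  have orth_S: "minner m n (\<lambda>i j. r i j - t * w i j) (mmult k A W) = 0" if "W \<in> ?S" for W
    using orth1[OF that] orth2[OF that]
    by (simp add: minner_diff_left minner_scale_left r_def w_def)
  have "mmult k A ?E = (\<lambda>i j. w i j + mmult k A Z2 i j)"
    by (simp add: w_def)
  then have orth_E: "minner m n (\<lambda>i j. r i j - t * w i j) (mmult k A ?E) = 0"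
    using orth_w orth_S[OF Z2] by (simp add: minner_add_right)
  show ?case
  proof (intro bexI[OF _ Z] ballI)
    fix W
    assume "W \<in> supported (\<lambda>i j. (i, j) \<in> insert e S)"
    then show "minner m n (\<lambda>i j. X i j - mmult k A Z i j) (mmult k A W) = 0"
      unfolding residual e using orthogonal_supported_insert[OF orth_S orth_E] by blast
  qed
qed

lemma minner_mmult_mmult:
  "minner m n (mmult k2 D Y) (mmult k1 X W) =
   (\<Sum>p<k1. \<Sum>q<k2. (\<Sum>i<m. D i q * cnj (X i p)) * (\<Sum>j<n. Y q j * cnj (W p j)))"
proof -
  let ?f = "\<lambda>i j p q. D i q * Y q j * (cnj (X i p) * cnj (W p j))"
  have "minner m n (mmult k2 D Y) (mmult k1 X W) = (\<Sum>i<m. \<Sum>j<n. \<Sum>p<k1. \<Sum>q<k2. ?f i j p q)"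
    unfolding minner_def mmult_def by (simp add: sum_distrib_left sum_distrib_right)
  also have "\<dots> = (\<Sum>i<m. \<Sum>p<k1. \<Sum>q<k2. \<Sum>j<n. ?f i j p q)"
    by (simp add: sum.swap[of _ "{..<n}"])
  also have "\<dots> = (\<Sum>p<k1. \<Sum>q<k2. \<Sum>i<m. \<Sum>j<n. ?f i j p q)"
    by (simp add: sum.swap[of _ "{..<m}"])
  also have "\<dots> = (\<Sum>p<k1. \<Sum>q<k2. (\<Sum>i<m. D i q * cnj (X i p)) * (\<Sum>j<n. Y q j * cnj (W p j)))"
    by (simp add: sum_product mult_ac)
  finally show ?thesis .
qed

lemma minner_mmult_right:
  "minner m k2 D (mmult k1 X V) = (\<Sum>p<k1. \<Sum>q<k2. (\<Sum>i<m. D i q * cnj (X i p)) * cnj (V p q))"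
proof -
  have "minner m k2 D (mmult k1 X V) = (\<Sum>i<m. \<Sum>q<k2. \<Sum>p<k1. D i q * cnj (X i p) * cnj (V p q))"
    unfolding minner_def mmult_def by (simp add: sum_distrib_left mult_ac)
  also have "\<dots> = (\<Sum>q<k2. \<Sum>p<k1. \<Sum>i<m. D i q * cnj (X i p) * cnj (V p q))"
    by (subst sum.swap) (simp add: sum.swap[of _ "{..<m}"])
  also have "\<dots> = (\<Sum>p<k1. \<Sum>q<k2. (\<Sum>i<m. D i q * cnj (X i p)) * cnj (V p q))"
    by (subst sum.swap) (simp add: sum_distrib_right)
  finally show ?thesis .
qed

text \<open>The support condition \<open>middle\<close> makes \<open>(X\<^sup>* D) (Y W\<^sup>*)\<close> vanish off \<open>Mid\<close>, so
  orthogonality of \<open>D\<close> to \<open>X V\<close> for \<open>V\<close> supported on \<open>Mid\<close> propagates to \<open>D Y\<close>.\<close>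

lemma minner_mmult_eq_0_through_middle:
  assumes middle: "\<And>i p q j. Lq i p \<Longrightarrow> Ls i q \<Longrightarrow> Rs q j \<Longrightarrow> Rq p j \<Longrightarrow> Mid p q"
    and X: "X \<in> supported Lq" and D: "D \<in> supported Ls"
    and Y: "Y \<in> supported Rs" and W: "W \<in> supported Rq"
    and orth: "\<And>V. V \<in> supported (\<lambda>p q. p < k1 \<and> q < k2 \<and> Mid p q) \<Longrightarrow>
                 minner m k2 D (mmult k1 X V) = 0"
  shows "minner m n (mmult k2 D Y) (mmult k1 X W) = 0"
proof -
  define G where "G p q = (\<Sum>i<m. D i q * cnj (X i p))" for p q
  define H where "H p q = (\<Sum>j<n. Y q j * cnj (W p j))" for p q
  define V where "V p q = (if p < k1 \<and> q < k2 \<and> Mid p q then cnj (H p q) else 0)" for p q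
  have GH_eq: "G p q * H p q = G p q * cnj (V p q)" if "p < k1" "q < k2" for p q
  proof (cases "Mid p q")
    case False
    have "G p q = 0 \<or> H p q = 0"
    proof (rule ccontr)
      assume "\<not> (G p q = 0 \<or> H p q = 0)"
      then obtain i j where "D i q * cnj (X i p) \<noteq> 0" "Y q j * cnj (W p j) \<noteq> 0"
        unfolding G_def H_def by (meson sum.neutral)
      then have "Ls i q" "Lq i p" "Rs q j" "Rq p j"
        using D X Y W by (auto simp: supported_def)
      with middle False show False
        by blast
    qed
    then show ?thesis
      by (auto simp: V_def False)
  qed (simp add: V_def that)
  have "minner m n (mmult k2 D Y) (mmult k1 X W) = (\<Sum>p<k1. \<Sum>q<k2. G p q * H p q)"
    unfolding G_def H_def by (rule minner_mmult_mmult)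
  also have "\<dots> = (\<Sum>p<k1. \<Sum>q<k2. G p q * cnj (V p q))"
    by (intro sum.cong refl GH_eq) auto
  also have "\<dots> = minner m k2 D (mmult k1 X V)"
    unfolding G_def by (rule minner_mmult_right[symmetric])
  also have "\<dots> = 0"
    by (rule orth) (simp add: supported_def V_def)
  finally show ?thesis .
qed

lemma Re_minner_eq_0_if_optimal_factor:
  assumes YN: "YN \<in> supported R" and W: "W \<in> supported R"
    and optimal: "\<And>W. W \<in> supported R \<Longrightarrow>
      mnormsq m n (\<lambda>i j. M i j - mmult k XN YN i j) \<le> mnormsq m n (\<lambda>i j. M i j - mmult k XN W i j)"
  shows "Re (minner m n (\<lambda>i j. M i j - mmult k XN YN i j) (mmult k XN W)) = 0"
proof (rule Re_minner_eq_0_if_minimal)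
  fix t :: real
  have "(\<lambda>i j. YN i j + of_real t * W i j) \<in> supported R"
    using YN W by (intro supported_add supported_scale)
  from optimal[OF this]
  show "mnormsq m n (\<lambda>i j. M i j - mmult k XN YN i j) \<le>
      mnormsq m n (\<lambda>i j. M i j - mmult k XN YN i j - of_real t * mmult k XN W i j)"
    by (simp add: mmult_add_right mmult_scale_right algebra_simps)
qed

lemma exists_orthogonal_residual_bounded:
  "\<exists>Z\<in>supported (\<lambda>p q. p < k \<and> q < l \<and> R p q). \<forall>V\<in>supported (\<lambda>p q. p < k \<and> q < l \<and> R p q).
     minner m l (\<lambda>i j. X i j - mmult k A Z i j) (mmult k A V) = 0"
proof -
  define S where "S = {(p, q). p < k \<and> q < l \<and> R p q}"
  have "finite S"
    by (rule finite_subset[of _ "{..<k} \<times> {..<l}"]) (auto simp: S_def)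
  moreover have "(\<lambda>p q. (p, q) \<in> S) = (\<lambda>p q. p < k \<and> q < l \<and> R p q)"
    by (simp add: S_def)
  ultimately show ?thesis
    using exists_orthogonal_residual[of S m l X k A] by simp
qed

lemma right_optimal_product_dominates:
  assumes comp_left: "\<And>i p q. Lq i p \<Longrightarrow> Mid p q \<Longrightarrow> Ls i q"
    and comp_right: "\<And>p q j. Mid p q \<Longrightarrow> Rs q j \<Longrightarrow> Rq p j"
    and middle: "\<And>i p q j. Lq i p \<Longrightarrow> Ls i q \<Longrightarrow> Rs q j \<Longrightarrow> Rq p j \<Longrightarrow> Mid p q"
    and XN: "XN \<in> supported Lq" and YN: "YN \<in> supported Rq"
    and X: "X \<in> supported Ls" and Y: "Y \<in> supported Rs"
    and optimal: "\<And>W. W \<in> supported Rq \<Longrightarrow>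
      mnormsq m n (\<lambda>i j. M i j - mmult k1 XN YN i j) \<le> mnormsq m n (\<lambda>i j. M i j - mmult k1 XN W i j)"
  shows "\<exists>X'\<in>supported Ls.
    mnormsq m n (\<lambda>i j. mmult k1 XN YN i j - mmult k2 X' Y i j) \<le> mnormsq m n (\<lambda>i j. M i j - mmult k2 X Y i j)"
proof -
  obtain Z where Z: "Z \<in> supported (\<lambda>p q. p < k1 \<and> q < k2 \<and> Mid p q)"
    and orth_proj: "\<And>V. V \<in> supported (\<lambda>p q. p < k1 \<and> q < k2 \<and> Mid p q) \<Longrightarrow>
       minner m k2 (\<lambda>i j. X i j - mmult k1 XN Z i j) (mmult k1 XN V) = 0"
    using exists_orthogonal_residual_bounded by blast
  have Z_Mid: "Z \<in> supported Mid"
    using Z by (rule supported_mono) simp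
  define X' where "X' = mmult k1 XN Z"
  have X': "X' \<in> supported Ls"
    unfolding X'_def using XN Z_Mid comp_left by (rule mmult_supported)
  define V where "V = (\<lambda>i j. YN i j - mmult k2 Z Y i j)"
  have V: "V \<in> supported Rq"
    unfolding V_def using YN mmult_supported[OF Z_Mid Y comp_right] by (rule supported_diff)
  have N_diff: "(\<lambda>i j. mmult k1 XN YN i j - mmult k2 X' Y i j) = mmult k1 XN V"
    by (simp add: X'_def V_def mmult_assoc mmult_diff_right)
  have "minner m n (mmult k2 (\<lambda>i j. X i j - X' i j) Y) (mmult k1 XN V) = 0"
    using middle XN supported_diff[OF X X'] Y V orth_proj
    unfolding X'_def by (rule minner_mmult_eq_0_through_middle)
  then have "minner m n (\<lambda>i j. mmult k2 X Y i j - mmult k2 X' Y i j) (mmult k1 XN V) = 0"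
    by (simp add: mmult_diff_left)
  moreover have "Re (minner m n (\<lambda>i j. M i j - mmult k1 XN YN i j) (mmult k1 XN V)) = 0"
    using YN V optimal by (rule Re_minner_eq_0_if_optimal_factor)
  ultimately have "mnormsq m n (\<lambda>i j. mmult k1 XN YN i j - mmult k2 X' Y i j)
      \<le> mnormsq m n (\<lambda>i j. M i j - mmult k2 X Y i j)"
    by (intro mnormsq_le_if_orthogonal) (simp_all add: N_diff)
  with X' show ?thesis
    by blast
qed

definition mtranspose :: "cmat \<Rightarrow> cmat" where
  "mtranspose A = (\<lambda>i j. A j i)"

lemma mnormsq_mtranspose: "mnormsq n m (mtranspose A) = mnormsq m n A"
  unfolding mnormsq_def mtranspose_def by (rule sum.swap)

lemma mtranspose_mmult: "mtranspose (mmult k A B) = mmult k (mtranspose B) (mtranspose A)"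
  by (simp add: mtranspose_def mmult_def mult.commute)

lemma mtranspose_mtranspose [simp]: "mtranspose (mtranspose A) = A"
  by (simp add: mtranspose_def)

lemma mtranspose_supported_iff: "mtranspose A \<in> supported (\<lambda>i j. R j i) \<longleftrightarrow> A \<in> supported R"
  unfolding mtranspose_def supported_def by blast

lemma left_optimal_product_dominates:
  assumes comp_left: "\<And>i q p. Ls i q \<Longrightarrow> Mid q p \<Longrightarrow> Lq i p"
    and comp_right: "\<And>q p j. Mid q p \<Longrightarrow> Rq p j \<Longrightarrow> Rs q j"
    and middle: "\<And>i q p j. Ls i q \<Longrightarrow> Lq i p \<Longrightarrow> Rs q j \<Longrightarrow> Rq p j \<Longrightarrow> Mid q p"
    and XN: "XN \<in> supported Lq" and YN: "YN \<in> supported Rq"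
    and X: "X \<in> supported Ls" and Y: "Y \<in> supported Rs"
    and optimal: "\<And>W. W \<in> supported Lq \<Longrightarrow>
      mnormsq m n (\<lambda>i j. M i j - mmult k1 XN YN i j) \<le> mnormsq m n (\<lambda>i j. M i j - mmult k1 W YN i j)"
  shows "\<exists>Y'\<in>supported Rs.
    mnormsq m n (\<lambda>i j. mmult k1 XN YN i j - mmult k2 X Y' i j) \<le> mnormsq m n (\<lambda>i j. M i j - mmult k2 X Y i j)"
proof -
  let ?T = mtranspose
  have transpose_diff: "(\<lambda>i j. ?T A i j - ?T B i j) = ?T (\<lambda>i j. A i j - B i j)" for A B
    by (simp add: mtranspose_def)
  have optimal_T: "mnormsq n m (\<lambda>i j. ?T M i j - mmult k1 (?T YN) (?T XN) i j)
      \<le> mnormsq n m (\<lambda>i j. ?T M i j - mmult k1 (?T YN) W i j)"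
    if "W \<in> supported (\<lambda>i j. Lq j i)" for W
  proof -
    have "?T W \<in> supported Lq"
      using that by (simp add: mtranspose_def supported_def)
    moreover have "mmult k1 (?T YN) W = ?T (mmult k1 (?T W) YN)"
      by (simp add: mtranspose_mmult)
    ultimately show ?thesis
      using optimal by (simp add: mnormsq_mtranspose transpose_diff mtranspose_mmult[symmetric])
  qed
  have "\<exists>X'\<in>supported (\<lambda>i j. Rs j i).
      mnormsq n m (\<lambda>i j. mmult k1 (?T YN) (?T XN) i j - mmult k2 X' (?T X) i j)
        \<le> mnormsq n m (\<lambda>i j. ?T M i j - mmult k2 (?T Y) (?T X) i j)"
  proof (rule right_optimal_product_dominates[where Lq = "\<lambda>i j. Rq j i" and Rq = "\<lambda>i j. Lq j i"
        and Ls = "\<lambda>i j. Rs j i" and Rs = "\<lambda>i j. Ls j i" and Mid = "\<lambda>i j. Mid j i",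
        OF _ _ _ _ _ _ _ optimal_T])
    show "?T YN \<in> supported (\<lambda>i j. Rq j i)" "?T XN \<in> supported (\<lambda>i j. Lq j i)"
      "?T Y \<in> supported (\<lambda>i j. Rs j i)" "?T X \<in> supported (\<lambda>i j. Ls j i)"
      using YN XN Y X by (simp_all only: mtranspose_supported_iff)
  qed (use comp_left comp_right middle in blast)+
  then obtain X' where X': "X' \<in> supported (\<lambda>i j. Rs j i)"
    and le: "mnormsq n m (\<lambda>i j. mmult k1 (?T YN) (?T XN) i j - mmult k2 X' (?T X) i j)
        \<le> mnormsq n m (\<lambda>i j. ?T M i j - mmult k2 (?T Y) (?T X) i j)"
    by blast
  show ?thesis
  proof
    show "?T X' \<in> supported Rs"
      using X' by (simp add: mtranspose_def supported_def)
    have "mmult k2 X' (?T X) = ?T (mmult k2 X (?T X'))"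
      by (simp add: mtranspose_mmult)
    then show "mnormsq m n (\<lambda>i j. mmult k1 XN YN i j - mmult k2 X (?T X') i j)
        \<le> mnormsq m n (\<lambda>i j. M i j - mmult k2 X Y i j)"
      using le by (simp add: mnormsq_mtranspose transpose_diff mtranspose_mmult[symmetric])
  qed
qed

section \<open>Supports of Kronecker patterns\<close>

text \<open>The support of \<open>I\<^sub>a \<otimes> 1 \<otimes> I\<^sub>d\<close> viewed as an \<open>r \<times> c\<close> matrix; parametrising by the
  total sizes \<open>r, c\<close> instead of the block sizes makes composition of patterns easy to state.\<close>

definition kron_support :: "nat \<Rightarrow> nat \<Rightarrow> nat \<Rightarrow> nat \<Rightarrow> nat \<Rightarrow> nat \<Rightarrow> bool" where
  "kron_support a d r c i j \<longleftrightarrow>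
     i < r \<and> j < c \<and> i div (r div a) = j div (c div a) \<and> i mod d = j mod d"

lemma div_div_refine:
  fixes a a' r x :: nat
  assumes "0 < a'" "a dvd a'" "a' dvd r"
  shows "x div (r div a) = x div (r div a') div (a' div a)"
proof -
  obtain k where k: "a' = a * k"
    using assms(2) by blast
  obtain t where t: "r = a' * t"
    using assms(3) by blast
  have "0 < a"
    using assms(1) k by simp
  then have "r div a = t * k" "a' div a = k"
    by (simp_all add: k t)
  moreover have "r div a' = t"
    using assms(1) by (simp add: t)
  ultimately show ?thesis
    by (simp add: div_mult2_eq)
qed

lemma mod_eq_dvd_modulus: "(d' :: nat) dvd d \<Longrightarrow> x mod d = y mod d \<Longrightarrow> x mod d' = y mod d'"
  by (metis mod_mod_cancel)

lemma kron_support_comp: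
  assumes "0 < a'" "a dvd a'" "a' dvd c" "a' dvd c'" "d' dvd d"
    and "kron_support a d r c i p" "kron_support a' d' c c' p j"
  shows "kron_support a d' r c' i j"
proof -
  have "i div (r div a) = p div (c div a)"
    using assms(6) by (simp add: kron_support_def)
  also have "\<dots> = p div (c div a') div (a' div a)"
    using assms(1-3) by (rule div_div_refine)
  also have "\<dots> = j div (c' div a') div (a' div a)"
    using assms(7) by (simp add: kron_support_def)
  also have "\<dots> = j div (c' div a)"
    using assms(1,2,4) by (rule div_div_refine[symmetric])
  moreover have "i mod d' = p mod d'"
    using assms(6) by (intro mod_eq_dvd_modulus[OF assms(5)]) (simp add: kron_support_def)
  ultimately show ?thesis
    using assms(6,7) by (simp add: kron_support_def)
qed

lemma kron_support_middle:
  assumes "0 < a2" "a1 dvd a2" "a2 dvd c2" "a2 dvd c3" "d2 dvd d1"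
    and "kron_support a d1 r c1 i p" "kron_support a d2 r c2 i p'"
    and "kron_support a2 e c2 c3 p' j" "kron_support a1 e c1 c3 p j"
  shows "kron_support a1 d2 c1 c2 p p'"
proof -
  have "p div (c1 div a1) = j div (c3 div a1)"
    using assms(9) by (simp add: kron_support_def)
  also have "\<dots> = j div (c3 div a2) div (a2 div a1)"
    using assms(1,2,4) by (rule div_div_refine)
  also have "\<dots> = p' div (c2 div a2) div (a2 div a1)"
    using assms(8) by (simp add: kron_support_def)
  also have "\<dots> = p' div (c2 div a1)"
    using assms(1-3) by (rule div_div_refine[symmetric])
  moreover have "p mod d2 = i mod d2"
    using assms(6) by (intro mod_eq_dvd_modulus[OF assms(5)]) (simp add: kron_support_def)
  ultimately show ?thesis
    using assms(6,7) by (simp add: kron_support_def)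
qed

lemma supp_S_eq_kron_support:
  "0 < a \<Longrightarrow> supp_S (a, b, c, d) = kron_support a d (a * b * d) (a * c * d)"
  by (simp add: supp_S_def kron_support_def fun_eq_iff mult.assoc)

section \<open>Chainable architectures\<close>

definition arch_a :: "pattern list \<Rightarrow> nat \<Rightarrow> nat" where
  "arch_a ps l = fst (ps ! l)"

definition arch_b :: "pattern list \<Rightarrow> nat \<Rightarrow> nat" where
  "arch_b ps l = fst (snd (ps ! l))"

definition arch_c :: "pattern list \<Rightarrow> nat \<Rightarrow> nat" where
  "arch_c ps l = fst (snd (snd (ps ! l)))"

definition arch_d :: "pattern list \<Rightarrow> nat \<Rightarrow> nat" where
  "arch_d ps l = snd (snd (snd (ps ! l)))"

definition arch_rows :: "pattern list \<Rightarrow> nat \<Rightarrow> nat" where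
  "arch_rows ps l = arch_a ps l * arch_b ps l * arch_d ps l"

definition arch_cols :: "pattern list \<Rightarrow> nat \<Rightarrow> nat" where
  "arch_cols ps l = arch_a ps l * arch_c ps l * arch_d ps l"

lemma nth_eq_arch: "ps ! l = (arch_a ps l, arch_b ps l, arch_c ps l, arch_d ps l)"
  by (simp add: arch_a_def arch_b_def arch_c_def arch_d_def)

lemma arch_pos:
  assumes "architecture ps" "l < length ps"
  shows "0 < arch_a ps l" "0 < arch_b ps l" "0 < arch_c ps l" "0 < arch_d ps l"
proof -
  have "pattern_pos (ps ! l)"
    using assms by (auto simp: architecture_def)
  then show "0 < arch_a ps l" "0 < arch_b ps l" "0 < arch_c ps l" "0 < arch_d ps l"
    by (simp_all add: nth_eq_arch[of ps l] pattern_pos_def)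
qed

lemma arch_cols_eq_rows_Suc:
  assumes "architecture ps" "Suc l < length ps"
  shows "arch_cols ps l = arch_rows ps (Suc l)"
proof -
  have "pcols (ps ! l) = prows (ps ! Suc l)"
    using assms by (auto simp: architecture_def)
  then show ?thesis
    by (simp add: nth_eq_arch[of ps] pcols_def prows_def arch_cols_def arch_rows_def)
qed

lemma chainable_arch_dvd_Suc:
  assumes "chainable_arch ps" "Suc l < length ps"
  shows "arch_a ps l dvd arch_a ps (Suc l)" "arch_d ps (Suc l) dvd arch_d ps l"
proof -
  have "chainable (ps ! l) (ps ! Suc l)"
    using assms by (auto simp: chainable_arch_def)
  then show "arch_a ps l dvd arch_a ps (Suc l)" "arch_d ps (Suc l) dvd arch_d ps l"
    by (simp_all add: nth_eq_arch[of ps] chainable_def)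
qed

lemma chainable_arch_dvd:
  assumes "chainable_arch ps" "u \<le> v" "v < length ps"
  shows "arch_a ps u dvd arch_a ps v \<and> arch_d ps v dvd arch_d ps u"
  using assms(2)
proof (induction v rule: dec_induct)
  case (step n)
  then have "arch_a ps n dvd arch_a ps (Suc n)" "arch_d ps (Suc n) dvd arch_d ps n"
    using assms(3) chainable_arch_dvd_Suc[OF assms(1), of n] by simp_all
  with step.IH show ?case
    by (meson dvd_trans)
qed simp

text \<open>Indices are 0-based: \<open>star_segment ps u v\<close> is the paper's \<open>\<pi>\<^bsub>u+1\<^esub> * \<dots> * \<pi>\<^bsub>v+1\<^esub>\<close>
  and \<open>segment_support ps u v\<close> is its support.\<close>

definition star_segment :: "pattern list \<Rightarrow> nat \<Rightarrow> nat \<Rightarrow> pattern" where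
  "star_segment ps u v = (arch_a ps u, arch_b ps u * arch_d ps u div arch_d ps v,
                          arch_a ps v * arch_c ps v div arch_a ps u, arch_d ps v)"

lemma iter_star_snoc: "ys \<noteq> [] \<Longrightarrow> iter_star (ys @ [y]) = pstar (iter_star ys) y"
  by (cases ys) (simp_all add: iter_star_def)

lemma iter_star_take_drop:
  assumes "chainable_arch ps" "u + k < length ps"
  shows "iter_star (take (Suc k) (drop u ps)) = star_segment ps u (u + k)"
  using assms(2)
proof (induction k)
  case 0
  then have "take (Suc 0) (drop u ps) = [ps ! u]"
    by (simp add: take_Suc_conv_app_nth)
  moreover have "0 < arch_a ps u" "0 < arch_d ps u"
    using arch_pos assms(1) 0 by (auto simp: chainable_arch_def)
  ultimately show ?case
    by (simp add: iter_star_def star_segment_def nth_eq_arch[of ps u])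
next
  case (Suc k)
  have "take (Suc (Suc k)) (drop u ps) = take (Suc k) (drop u ps) @ [ps ! (u + Suc k)]"
    using Suc.prems by (simp add: take_Suc_conv_app_nth)
  moreover have "take (Suc k) (drop u ps) \<noteq> []"
    using Suc.prems by simp
  moreover have "arch_d ps (u + k) dvd arch_b ps u * arch_d ps u"
    using chainable_arch_dvd[OF assms(1), of u "u + k"] Suc.prems by simp
  ultimately show ?case
    using Suc by (simp add: iter_star_snoc pstar_def star_segment_def nth_eq_arch[of ps "Suc (u + k)"])
qed

lemma split_left_eq_star_segment:
  assumes "chainable_arch ps" "1 \<le> s" "s \<le> length ps"
  shows "split_left ps s = star_segment ps 0 (s - 1)"
  using iter_star_take_drop[OF assms(1), of 0 "s - 1"] assms by (simp add: split_left_def)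

lemma split_right_eq_star_segment:
  assumes "chainable_arch ps" "s < length ps"
  shows "split_right ps s = star_segment ps s (length ps - 1)"
  using iter_star_take_drop[OF assms(1), of s "length ps - 1 - s"] assms by (simp add: split_right_def)

definition segment_support :: "pattern list \<Rightarrow> nat \<Rightarrow> nat \<Rightarrow> nat \<Rightarrow> nat \<Rightarrow> bool" where
  "segment_support ps u v = kron_support (arch_a ps u) (arch_d ps v) (arch_rows ps u) (arch_cols ps v)"

lemma star_segment_supp_rows_cols:
  assumes "chainable_arch ps" "u \<le> v" "v < length ps"
  shows "supp_S (star_segment ps u v) = segment_support ps u v"
    and "prows (star_segment ps u v) = arch_rows ps u"
    and "pcols (star_segment ps u v) = arch_cols ps v"
proof -
  have dvd: "arch_a ps u dvd arch_a ps v" "arch_d ps v dvd arch_d ps u"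
    using chainable_arch_dvd[OF assms] by auto
  have "0 < arch_a ps u"
    using arch_pos assms by (auto simp: chainable_arch_def)
  moreover have rows: "arch_a ps u * (arch_b ps u * arch_d ps u div arch_d ps v) * arch_d ps v = arch_rows ps u"
    using dvd by (simp add: arch_rows_def mult.assoc)
  moreover have cols: "arch_a ps u * (arch_a ps v * arch_c ps v div arch_a ps u) * arch_d ps v = arch_cols ps v"
    using dvd by (simp add: arch_cols_def mult.assoc)
  ultimately show "supp_S (star_segment ps u v) = segment_support ps u v"
    by (simp add: star_segment_def supp_S_eq_kron_support segment_support_def)
  show "prows (star_segment ps u v) = arch_rows ps u"
    using rows by (simp add: star_segment_def prows_def)
  show "pcols (star_segment ps u v) = arch_cols ps v"
    using cols by (simp add: star_segment_def pcols_def)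
qed

lemma Bset_eq_segments:
  assumes "chainable_arch ps" "1 \<le> s" "s < length ps"
  shows "Bset ps s = {mmult (arch_rows ps s) X Y | X Y.
    X \<in> supported (segment_support ps 0 (s - 1)) \<and> Y \<in> supported (segment_support ps s (length ps - 1))}"
proof -
  have "arch_cols ps (s - 1) = arch_rows ps s"
    using arch_cols_eq_rows_Suc[of ps "s - 1"] assms by (simp add: chainable_arch_def)
  then show ?thesis
    using star_segment_supp_rows_cols[OF assms(1), of 0 "s - 1"] star_segment_supp_rows_cols[OF assms(1), of s "length ps - 1"] assms
    by (simp add: Bset_def split_left_eq_star_segment split_right_eq_star_segment factors_eq_supported)
qed

lemma arch_a_dvd_rows_cols:
  assumes "chainable_arch ps" "u \<le> v" "v < length ps"
  shows "arch_a ps u dvd arch_rows ps v" "arch_a ps u dvd arch_cols ps v"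
  using chainable_arch_dvd[OF assms] by (auto simp: arch_rows_def arch_cols_def)

lemma segment_support_comp:
  assumes ch: "chainable_arch ps" and "u \<le> v" "v < w" "w < length ps"
    and "segment_support ps u v i p" "segment_support ps (Suc v) w p j"
  shows "segment_support ps u w i j"
proof -
  have link: "arch_cols ps v = arch_rows ps (Suc v)"
    using ch assms(3,4) by (intro arch_cols_eq_rows_Suc) (simp_all add: chainable_arch_def)
  have pos: "0 < arch_a ps (Suc v)"
    using ch assms(3,4) arch_pos(1) by (simp add: chainable_arch_def)
  have dvd_a: "arch_a ps u dvd arch_a ps (Suc v)" and dvd_d: "arch_d ps w dvd arch_d ps v"
    using chainable_arch_dvd[OF ch, of u "Suc v"] chainable_arch_dvd[OF ch, of v w] assms(2-4) by simp_all
  have dvd_cols: "arch_a ps (Suc v) dvd arch_cols ps v" "arch_a ps (Suc v) dvd arch_cols ps w"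
    using arch_a_dvd_rows_cols[OF ch, of "Suc v" "Suc v"] arch_a_dvd_rows_cols[OF ch, of "Suc v" w]
      assms(3,4) link by simp_all
  have "kron_support (arch_a ps (Suc v)) (arch_d ps w) (arch_cols ps v) (arch_cols ps w) p j"
    using assms(6) link by (simp add: segment_support_def)
  with kron_support_comp[OF pos dvd_a dvd_cols dvd_d] assms(5) show ?thesis
    unfolding segment_support_def by blast
qed

lemma segment_support_middle:
  assumes ch: "chainable_arch ps" and "v < w" "w < z" "z < length ps"
    and "segment_support ps u v i p" "segment_support ps u w i p'"
    and "segment_support ps (Suc w) z p' j" "segment_support ps (Suc v) z p j"
  shows "segment_support ps (Suc v) w p p'"
proof -
  have link: "arch_cols ps v = arch_rows ps (Suc v)" "arch_cols ps w = arch_rows ps (Suc w)"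
    using ch assms(2-4) arch_cols_eq_rows_Suc by (simp_all add: chainable_arch_def)
  have pos: "0 < arch_a ps (Suc w)"
    using ch assms(2-4) arch_pos(1) by (simp add: chainable_arch_def)
  have dvd_a: "arch_a ps (Suc v) dvd arch_a ps (Suc w)" and dvd_d: "arch_d ps w dvd arch_d ps v"
    using chainable_arch_dvd[OF ch, of "Suc v" "Suc w"] chainable_arch_dvd[OF ch, of v w] assms(2-4)
    by simp_all
  have dvd_cols: "arch_a ps (Suc w) dvd arch_cols ps w" "arch_a ps (Suc w) dvd arch_cols ps z"
    using arch_a_dvd_rows_cols[OF ch, of "Suc w" "Suc w"] arch_a_dvd_rows_cols[OF ch, of "Suc w" z]
      assms(2-4) link by simp_all
  have "kron_support (arch_a ps (Suc w)) (arch_d ps z) (arch_cols ps w) (arch_cols ps z) p' j"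
    "kron_support (arch_a ps (Suc v)) (arch_d ps z) (arch_cols ps v) (arch_cols ps z) p j"
    using assms(7,8) link by (simp_all add: segment_support_def)
  with kron_support_middle[OF pos dvd_a dvd_cols dvd_d] assms(5,6)
  have "kron_support (arch_a ps (Suc v)) (arch_d ps w) (arch_cols ps v) (arch_cols ps w) p p'"
    unfolding segment_support_def by blast
  then show ?thesis
    using link by (simp add: segment_support_def)
qed

lemma segment_supports_split:
  assumes ch: "chainable_arch ps" and "1 \<le> q" "q < s" "s < length ps"
  defines "z \<equiv> length ps - 1"
  shows "\<And>i p p'. segment_support ps 0 (q - 1) i p \<Longrightarrow> segment_support ps q (s - 1) p p' \<Longrightarrow>
           segment_support ps 0 (s - 1) i p'"
    and "\<And>p p' j. segment_support ps q (s - 1) p p' \<Longrightarrow> segment_support ps s z p' j \<Longrightarrow>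
           segment_support ps q z p j"
    and "\<And>i p p' j. segment_support ps 0 (q - 1) i p \<Longrightarrow> segment_support ps 0 (s - 1) i p' \<Longrightarrow>
           segment_support ps s z p' j \<Longrightarrow> segment_support ps q z p j \<Longrightarrow> segment_support ps q (s - 1) p p'"
proof -
  have Suc_q: "Suc (q - 1) = q" and Suc_s: "Suc (s - 1) = s"
    using assms(2,3) by simp_all
  show "segment_support ps 0 (s - 1) i p'"
    if "segment_support ps 0 (q - 1) i p" "segment_support ps q (s - 1) p p'" for i p p'
    using segment_support_comp[OF ch, of 0 "q - 1" "s - 1"] that assms(2-4) unfolding Suc_q by simp
  show "segment_support ps q z p j"
    if "segment_support ps q (s - 1) p p'" "segment_support ps s z p' j" for p p' j
    using segment_support_comp[OF ch, of q "s - 1" z] that assms(3,4) unfolding Suc_s z_def by simp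
  show "segment_support ps q (s - 1) p p'"
    if "segment_support ps 0 (q - 1) i p" "segment_support ps 0 (s - 1) i p'"
      "segment_support ps s z p' j" "segment_support ps q z p j" for i p p' j
    using segment_support_middle[OF ch, of "q - 1" "s - 1" z 0] that assms(2-4)
    unfolding Suc_q Suc_s z_def by simp
qed

lemma Bset_nonempty: "Bset ps s \<noteq> {}"
proof -
  have "(\<lambda>i j. 0) \<in> factors p" for p
    by (simp add: factors_def)
  then have "mmult (pcols (split_left ps s)) (\<lambda>i j. 0) (\<lambda>i j. 0) \<in> Bset ps s"
    unfolding Bset_def by blast
  then show ?thesis
    by blast
qed

lemma Bset_projection_dominates:
  assumes ch: "chainable_arch ps"
    and s: "1 \<le> s" "s < length ps" and q: "1 \<le> q" "q < length ps"
    and N: "N \<in> Bset ps q"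
    and optimal: "\<And>B. B \<in> Bset ps q \<Longrightarrow>
      mnormsq m n (\<lambda>i j. M i j - N i j) \<le> mnormsq m n (\<lambda>i j. M i j - B i j)"
    and B: "B \<in> Bset ps s"
  shows "\<exists>B'\<in>Bset ps s. mnormsq m n (\<lambda>i j. N i j - B' i j) \<le> mnormsq m n (\<lambda>i j. M i j - B i j)"
proof -
  let ?z = "length ps - 1"
  let ?seg = "segment_support ps"
  obtain XN YN where XN: "XN \<in> supported (?seg 0 (q - 1))" and YN: "YN \<in> supported (?seg q ?z)"
    and N_eq: "N = mmult (arch_rows ps q) XN YN"
    using N unfolding Bset_eq_segments[OF ch q] by blast
  obtain X Y where X: "X \<in> supported (?seg 0 (s - 1))" and Y: "Y \<in> supported (?seg s ?z)"
    and B_eq: "B = mmult (arch_rows ps s) X Y"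
    using B unfolding Bset_eq_segments[OF ch s] by blast
  have Bset_s: "mmult (arch_rows ps s) X' Y' \<in> Bset ps s"
    if "X' \<in> supported (?seg 0 (s - 1))" "Y' \<in> supported (?seg s ?z)" for X' Y'
    using that unfolding Bset_eq_segments[OF ch s] by blast
  have Bset_q: "mmult (arch_rows ps q) X' Y' \<in> Bset ps q"
    if "X' \<in> supported (?seg 0 (q - 1))" "Y' \<in> supported (?seg q ?z)" for X' Y'
    using that unfolding Bset_eq_segments[OF ch q] by blast
  consider "q = s" | "q < s" | "s < q"
    by linarith
  then show ?thesis
  proof cases
    case 1
    then show ?thesis
      using N by (intro bexI[of _ N]) (simp_all add: mnormsq_def sum_nonneg)
  next
    case 2
    have "\<exists>X'\<in>supported (?seg 0 (s - 1)).
        mnormsq m n (\<lambda>i j. N i j - mmult (arch_rows ps s) X' Y i j) \<le> mnormsq m n (\<lambda>i j. M i j - B i j)"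
      unfolding N_eq B_eq
    proof (rule right_optimal_product_dominates[OF segment_supports_split[OF ch q(1) 2 s(2)] XN YN X Y])
      show "mnormsq m n (\<lambda>i j. M i j - mmult (arch_rows ps q) XN YN i j)
          \<le> mnormsq m n (\<lambda>i j. M i j - mmult (arch_rows ps q) XN W i j)"
        if "W \<in> supported (?seg q ?z)" for W
        using optimal[OF Bset_q[OF XN that]] by (simp add: N_eq)
    qed
    then show ?thesis
      using Bset_s[OF _ Y] by blast
  next
    case 3
    have "\<exists>Y'\<in>supported (?seg s ?z).
        mnormsq m n (\<lambda>i j. N i j - mmult (arch_rows ps s) X Y' i j) \<le> mnormsq m n (\<lambda>i j. M i j - B i j)"
      unfolding N_eq B_eq
    proof (rule left_optimal_product_dominates[OF segment_supports_split[OF ch s(1) 3 q(2)] XN YN X Y])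
      show "mnormsq m n (\<lambda>i j. M i j - mmult (arch_rows ps q) XN YN i j)
          \<le> mnormsq m n (\<lambda>i j. M i j - mmult (arch_rows ps q) W YN i j)"
        if "W \<in> supported (?seg 0 (q - 1))" for W
        using optimal[OF Bset_q[OF that YN]] by (simp add: N_eq)
    qed
    then show ?thesis
      using Bset_s[OF X] by blast
  qed
qed

theorem lemma7p11:
  fixes beta :: "pattern list" and M N :: cmat and s q :: nat
  assumes "chainable_arch beta"
    and "1 \<le> s" and "s < length beta"
    and "1 \<le> q" and "q < length beta"
    and "N \<in> Bset beta q"
    and "frob (arows beta) (acols beta) (\<lambda>i j. M i j - N i j) = Err beta q M"
  shows "Err beta s M \<ge> Err beta s N"
proof -
  let ?m = "arows beta" and ?n = "acols beta"
  have bdd: "bdd_below ((\<lambda>B. frob ?m ?n (\<lambda>i j. A i j - B i j)) ` Bset beta t)" for A t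
    by (rule bdd_belowI[of _ 0]) (auto simp: frob_nonneg)
  have optimal: "mnormsq ?m ?n (\<lambda>i j. M i j - N i j) \<le> mnormsq ?m ?n (\<lambda>i j. M i j - B i j)"
    if "B \<in> Bset beta q" for B
  proof -
    have "Err beta q M \<le> frob ?m ?n (\<lambda>i j. M i j - B i j)"
      unfolding Err_def using that by (intro cInf_lower bdd) simp
    then show ?thesis
      using assms(7)[symmetric] by (simp add: frob_eq_sqrt_mnormsq)
  qed
  show ?thesis
    unfolding Err_def
  proof (rule cINF_mono[OF Bset_nonempty bdd])
    fix B
    assume "B \<in> Bset beta s"
    from Bset_projection_dominates[OF assms(1-6) optimal this]
    show "\<exists>B'\<in>Bset beta s. frob ?m ?n (\<lambda>i j. N i j - B' i j) \<le> frob ?m ?n (\<lambda>i j. M i j - B i j)"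
      by (simp add: frob_eq_sqrt_mnormsq)
  qed
qed

end
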